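(* Let $n\ge3$ and order the letters $y_1<y_2<\cdots<y_n$. The rewriting system on words in $y_1,\dots,y_n$ with rules $y_iy_j\to y_jy_i$ for $j+2\le i\le n-1$ and $y_ny_k\to y_ky_n$ for $1\le k\le n-3$ (i.e. the presentation of $K^{\infty}_n$ with each relation oriented towards the length-lexicographically smaller side) is complete: every ambiguity is resolvable, so every element of $K^{\infty}_n$ has a unique irreducible representative word.
   Context: $K^{\infty}_n=\langle y_1,\dots,y_n\mid y_iy_j=y_jy_i\ (j+2\le i\le n-1),\ y_ny_k=y_ky_n\ (1\le k\le n-3)\rangle$. A presentation/rewriting system is complete if it is terminating and all (overlap) ambiguities can be resolved to a common word. *)

theory Defs
  imports Main
begin

text \<open>Letters y_1,...,y_n are encoded as natural numbers 1..n, ordered by the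
usual order on nat; words are lists of letters.\<close>

definition alph_word :: "nat \<Rightarrow> nat list \<Rightarrow> bool" where
  "alph_word n w \<longleftrightarrow> set w \<subseteq> {1..n}"

definition Kinf_rule :: "nat \<Rightarrow> nat \<Rightarrow> nat \<Rightarrow> bool" where
  "Kinf_rule n i j \<longleftrightarrow>
     (1 \<le> j \<and> j + 2 \<le> i \<and> i \<le> n - 1) \<or> (i = n \<and> 1 \<le> j \<and> j \<le> n - 3)"

definition Kinf_step :: "nat \<Rightarrow> (nat list \<times> nat list) set" where
  "Kinf_step n = {(u @ [i, j] @ v, u @ [j, i] @ v) | u v i j.
      alph_word n u \<and> alph_word n v \<and> Kinf_rule n i j}"

definition terminating :: "('a \<times> 'a) set \<Rightarrow> bool" where
  "terminating R \<longleftrightarrow> wf (R\<inverse>)"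

definition confluent :: "('a \<times> 'a) set \<Rightarrow> bool" where
  "confluent R \<longleftrightarrow> (\<forall>a b c. (a, b) \<in> R\<^sup>* \<and> (a, c) \<in> R\<^sup>* \<longrightarrow>
       (\<exists>d. (b, d) \<in> R\<^sup>* \<and> (c, d) \<in> R\<^sup>*))"

definition locally_confluent :: "('a \<times> 'a) set \<Rightarrow> bool" where
  "locally_confluent R \<longleftrightarrow> (\<forall>a b c. (a, b) \<in> R \<and> (a, c) \<in> R \<longrightarrow>
       (\<exists>d. (b, d) \<in> R\<^sup>* \<and> (c, d) \<in> R\<^sup>*))"

definition complete :: "('a \<times> 'a) set \<Rightarrow> bool" where
  "complete R \<longleftrightarrow> terminating R \<and> confluent R"

definition irreducible :: "('a \<times> 'a) set \<Rightarrow> 'a \<Rightarrow> bool" where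
  "irreducible R a \<longleftrightarrow> (\<nexists>b. (a, b) \<in> R)"

end

theory Submission
  imports Defs
begin

text \<open>Every rule replaces a factor \<open>i j\<close> by \<open>j i\<close> with \<open>j < i\<close>, so the number of inversions
  of a word drops and the system terminates. The rule relation is transitive: if \<open>i j\<close> and \<open>j k\<close>
  are left-hand sides, so is \<open>i k\<close>. Hence the only overlap ambiguity \<open>i j k\<close> resolves, both
  ways leading to \<open>k j i\<close>, and non-overlapping rewrites commute. Newman's lemma then gives
  confluence, and confluence plus termination gives unique normal forms.\<close>

lemma newman:
  assumes "terminating R" and "locally_confluent R"
  shows "confluent R"
proof -
  have "\<forall>b c. (a, b) \<in> R\<^sup>* \<and> (a, c) \<in> R\<^sup>* \<longrightarrow> (\<exists>d. (b, d) \<in> R\<^sup>* \<and> (c, d) \<in> R\<^sup>*)" for a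
    using assms(1)[unfolded terminating_def]
  proof (induction a rule: wf_induct_rule)
    case (less a)
    show ?case
    proof (intro allI impI)
      fix b c assume "(a, b) \<in> R\<^sup>* \<and> (a, c) \<in> R\<^sup>*"
      then consider "a = b" | "a = c"
        | b1 c1 where "(a, b1) \<in> R" "(b1, b) \<in> R\<^sup>*" "(a, c1) \<in> R" "(c1, c) \<in> R\<^sup>*"
        by (meson converse_rtranclE)
      then show "\<exists>d. (b, d) \<in> R\<^sup>* \<and> (c, d) \<in> R\<^sup>*"
      proof cases
        case (3 b1 c1)
        obtain e where "(b1, e) \<in> R\<^sup>*" "(c1, e) \<in> R\<^sup>*"
          using assms(2) \<open>(a, b1) \<in> R\<close> \<open>(a, c1) \<in> R\<close> unfolding locally_confluent_def by blast
        moreover obtain f where "(b, f) \<in> R\<^sup>*" "(e, f) \<in> R\<^sup>*"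
          using less.IH \<open>(a, b1) \<in> R\<close> \<open>(b1, b) \<in> R\<^sup>*\<close> calculation(1) by blast
        moreover have "(c1, f) \<in> R\<^sup>*"
          using calculation(2,4) by (rule rtrancl_trans)
        moreover obtain g where "(f, g) \<in> R\<^sup>*" "(c, g) \<in> R\<^sup>*"
          using less.IH \<open>(a, c1) \<in> R\<close> \<open>(c1, c) \<in> R\<^sup>*\<close> calculation(5) by blast
        ultimately show ?thesis by (meson rtrancl_trans)
      qed (use \<open>(a, b) \<in> R\<^sup>* \<and> (a, c) \<in> R\<^sup>*\<close> in blast)+
    qed
  qed
  then show ?thesis unfolding confluent_def by blast
qed

lemma confluent_conversion_joinable:
  assumes "confluent R" and "(a, b) \<in> (R \<union> R\<inverse>)\<^sup>*"
  shows "\<exists>d. (a, d) \<in> R\<^sup>* \<and> (b, d) \<in> R\<^sup>*"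
  using assms(2)
proof (induction rule: rtrancl_induct)
  case base
  then show ?case by blast
next
  case (step y z)
  then obtain d where ad: "(a, d) \<in> R\<^sup>*" and yd: "(y, d) \<in> R\<^sup>*" by blast
  show ?case
  proof (cases "(y, z) \<in> R")
    case True
    then obtain e where "(d, e) \<in> R\<^sup>*" "(z, e) \<in> R\<^sup>*"
      using assms(1) yd unfolding confluent_def by (meson r_into_rtrancl)
    then show ?thesis using ad by (meson rtrancl_trans)
  next
    case False
    then have "(z, y) \<in> R" using step by auto
    then show ?thesis using ad yd by (meson converse_rtrancl_into_rtrancl)
  qed
qed

lemma irreducible_rtrancl_eq: "irreducible R a \<Longrightarrow> (a, b) \<in> R\<^sup>* \<Longrightarrow> b = a"
  unfolding irreducible_def by (auto elim: converse_rtranclE)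

lemma terminating_normal_form_exists:
  assumes "terminating R"
  shows "\<exists>v. (w, v) \<in> R\<^sup>* \<and> irreducible R v"
  using assms[unfolded terminating_def]
proof (induction w rule: wf_induct_rule)
  case (less w)
  show ?case
  proof (cases "irreducible R w")
    case False
    then obtain b where "(w, b) \<in> R" unfolding irreducible_def by blast
    moreover obtain v where "(b, v) \<in> R\<^sup>*" "irreducible R v" using less.IH calculation by blast
    ultimately show ?thesis by (meson converse_rtrancl_into_rtrancl)
  qed blast
qed

lemma complete_unique_normal_form:
  assumes "complete R"
  shows "\<exists>!v. (w, v) \<in> (R \<union> R\<inverse>)\<^sup>* \<and> irreducible R v"
proof -
  obtain v where wv: "(w, v) \<in> R\<^sup>*" and v: "irreducible R v"
    using assms terminating_normal_form_exists unfolding complete_def by meson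
  have conv: "(w, v) \<in> (R \<union> R\<inverse>)\<^sup>*"
    using wv rtrancl_mono[of R "R \<union> R\<inverse>"] by blast
  have "v' = v" if "(w, v') \<in> (R \<union> R\<inverse>)\<^sup>*" and v': "irreducible R v'" for v'
  proof -
    have "(v, w) \<in> (R \<union> R\<inverse>)\<^sup>*"
      using conv by (metis converse_Un converse_converse rtrancl_converseI sup_commute)
    then have "(v, v') \<in> (R \<union> R\<inverse>)\<^sup>*" using that(1) by (rule rtrancl_trans)
    then obtain d where vd: "(v, d) \<in> R\<^sup>*" and v'd: "(v', d) \<in> R\<^sup>*"
      using confluent_conversion_joinable assms unfolding complete_def by metis
    show ?thesis
      using irreducible_rtrancl_eq[OF v vd] irreducible_rtrancl_eq[OF v' v'd] by simp
  qed
  with conv v show ?thesis by blast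
qed

definition swap_step :: "'a set \<Rightarrow> ('a \<Rightarrow> 'a \<Rightarrow> bool) \<Rightarrow> ('a list \<times> 'a list) set" where
  "swap_step A r = {(u @ [i, j] @ v, u @ [j, i] @ v) | u v i j. set u \<subseteq> A \<and> set v \<subseteq> A \<and> r i j}"

fun inversions :: "'a::linorder list \<Rightarrow> nat" where
  "inversions [] = 0"
| "inversions (x # xs) = length (filter (\<lambda>y. y < x) xs) + inversions xs"

lemma inversions_append:
  "inversions (u @ w) = inversions u + inversions w + (\<Sum>x\<leftarrow>u. length (filter (\<lambda>y. y < x) w))"
  by (induction u) auto

lemma inversions_swap_less:
  assumes "j < i"
  shows "inversions (u @ [j, i] @ v) < inversions (u @ [i, j] @ v)"
proof -
  have swap_invariant: "length (filter P ([j, i] @ v)) = length (filter P ([i, j] @ v))" for P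
    by auto
  show ?thesis unfolding inversions_append swap_invariant using assms by auto
qed

lemma terminating_swap_step:
  fixes r :: "'a::linorder \<Rightarrow> 'a \<Rightarrow> bool"
  assumes "\<And>i j. r i j \<Longrightarrow> j < i"
  shows "terminating (swap_step A r)"
  unfolding terminating_def
proof (rule wf_subset[OF wf_measure[of inversions]])
  show "(swap_step A r)\<inverse> \<subseteq> measure inversions"
  proof
    fix x assume "x \<in> (swap_step A r)\<inverse>"
    then obtain u v i j where "x = (u @ [j, i] @ v, u @ [i, j] @ v)" and "r i j"
      unfolding swap_step_def by blast
    then show "x \<in> measure inversions" using inversions_swap_less[OF assms] by simp
  qed
qed

definition swap_adj :: "'a list \<Rightarrow> nat \<Rightarrow> 'a list" where
  "swap_adj xs p = xs[p := xs ! Suc p, Suc p := xs ! p]"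

lemma length_swap_adj [simp]: "length (swap_adj xs p) = length xs"
  unfolding swap_adj_def by simp

lemma nth_swap_adj:
  "Suc p < length xs \<Longrightarrow>
    swap_adj xs p ! k = (if k = p then xs ! Suc p else if k = Suc p then xs ! p else xs ! k)"
  unfolding swap_adj_def by (auto simp: nth_list_update)

lemma set_swap_adj_subset: "Suc p < length xs \<Longrightarrow> set (swap_adj xs p) \<subseteq> set xs"
  unfolding swap_adj_def by (simp add: set_update_subsetI)

lemma swap_adj_append: "swap_adj (u @ [i, j] @ v) (length u) = u @ [j, i] @ v"
  unfolding swap_adj_def by (simp add: list_update_append nth_append)

lemma swap_step_iff:
  assumes "\<And>i j. r i j \<Longrightarrow> i \<in> A \<and> j \<in> A"
  shows "(a, b) \<in> swap_step A r \<longleftrightarrow>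
    set a \<subseteq> A \<and> (\<exists>p. Suc p < length a \<and> r (a ! p) (a ! Suc p) \<and> b = swap_adj a p)"
proof
  assume "(a, b) \<in> swap_step A r"
  then obtain u v i j where a: "a = u @ [i, j] @ v" and b: "b = u @ [j, i] @ v"
    and "set u \<subseteq> A" "set v \<subseteq> A" "r i j"
    unfolding swap_step_def by blast
  then have "set a \<subseteq> A"
    using assms by auto
  moreover have "Suc (length u) < length a" "a ! length u = i" "a ! Suc (length u) = j"
    using a by (simp_all add: nth_append)
  moreover have "b = swap_adj a (length u)"
    using a b swap_adj_append by metis
  ultimately show "set a \<subseteq> A \<and> (\<exists>p. Suc p < length a \<and> r (a ! p) (a ! Suc p) \<and> b = swap_adj a p)"
    using \<open>r i j\<close> by metis
next
  assume "set a \<subseteq> A \<and> (\<exists>p. Suc p < length a \<and> r (a ! p) (a ! Suc p) \<and> b = swap_adj a p)"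
  then obtain p where a_letters: "set a \<subseteq> A" and p: "Suc p < length a"
    and "r (a ! p) (a ! Suc p)" and b: "b = swap_adj a p"
    by blast
  define u v where "u = take p a" and "v = drop (Suc (Suc p)) a"
  have a: "a = u @ [a ! p, a ! Suc p] @ v"
    using p unfolding u_def v_def
    by (metis Cons_nth_drop_Suc Suc_lessD append_Cons append_Nil append_take_drop_id)
  have "length u = p" using p unfolding u_def by simp
  then have "b = u @ [a ! Suc p, a ! p] @ v"
    using b a swap_adj_append by metis
  moreover have "set u \<subseteq> A" "set v \<subseteq> A"
    using a_letters unfolding u_def v_def by (auto dest: in_set_takeD in_set_dropD)
  ultimately show "(a, b) \<in> swap_step A r"
    unfolding swap_step_def using a \<open>r (a ! p) (a ! Suc p)\<close> by blast
qed

lemma swap_adj_commute: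
  "Suc p < q \<Longrightarrow> Suc q < length xs \<Longrightarrow> swap_adj (swap_adj xs p) q = swap_adj (swap_adj xs q) p"
  by (intro nth_equalityI) (simp_all add: nth_swap_adj)

lemma swap_adj_braid:
  "Suc (Suc p) < length xs \<Longrightarrow>
    swap_adj (swap_adj (swap_adj xs p) (Suc p)) p = swap_adj (swap_adj (swap_adj xs (Suc p)) p) (Suc p)"
  by (intro nth_equalityI) (simp_all add: nth_swap_adj)

lemma swap_step_join:
  assumes letters: "\<And>i j. r i j \<Longrightarrow> i \<in> A \<and> j \<in> A" and "transp r"
    and "set a \<subseteq> A" and "p < q" and "Suc q < length a"
    and rp: "r (a ! p) (a ! Suc p)" and rq: "r (a ! q) (a ! Suc q)"
  shows "\<exists>d. (swap_adj a p, d) \<in> (swap_step A r)\<^sup>* \<and> (swap_adj a q, d) \<in> (swap_step A r)\<^sup>*"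
proof -
  have step: "(w, swap_adj w m) \<in> swap_step A r"
    if "set w \<subseteq> A" "Suc m < length w" "r (w ! m) (w ! Suc m)" for w m
    using that swap_step_iff[OF letters] by blast
  have set_swap: "set (swap_adj w m) \<subseteq> A" if "set w \<subseteq> A" "Suc m < length w" for w m
    using that set_swap_adj_subset by blast
  let ?b = "swap_adj a p" and ?c = "swap_adj a q"
  have Ab: "set ?b \<subseteq> A" and Ac: "set ?c \<subseteq> A"
    using set_swap assms by simp_all
  show ?thesis
  proof (cases "q = Suc p")
    case True
    \<comment> \<open>the overlap \<open>i j k\<close>: both sides reach \<open>k j i\<close>, which needs the rule \<open>i k\<close>\<close>
    have rt: "r (a ! p) (a ! Suc q)"
      using \<open>transp r\<close> rp rq True by (metis transpD)
    have "(?b, swap_adj ?b q) \<in> swap_step A r"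
      using Ab assms True rt by (intro step) (simp_all add: nth_swap_adj)
    moreover have "(swap_adj ?b q, swap_adj (swap_adj ?b q) p) \<in> swap_step A r"
      using set_swap[OF Ab] assms True by (intro step) (simp_all add: nth_swap_adj)
    moreover have "(?c, swap_adj ?c p) \<in> swap_step A r"
      using Ac assms True rt by (intro step) (simp_all add: nth_swap_adj)
    moreover have "(swap_adj ?c p, swap_adj (swap_adj ?c p) q) \<in> swap_step A r"
      using set_swap[OF Ac] assms True by (intro step) (simp_all add: nth_swap_adj)
    moreover have "swap_adj (swap_adj ?b q) p = swap_adj (swap_adj ?c p) q"
      using swap_adj_braid \<open>Suc q < length a\<close> True by simp
    ultimately show ?thesis
      by (metis converse_rtrancl_into_rtrancl r_into_rtrancl)
  next
    case False
    then have "Suc p < q" using \<open>p < q\<close> by simp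
    have "(?b, swap_adj ?b q) \<in> swap_step A r" "(?c, swap_adj ?c p) \<in> swap_step A r"
      using Ab Ac assms \<open>Suc p < q\<close> by (auto intro!: step simp: nth_swap_adj)
    moreover have "swap_adj ?b q = swap_adj ?c p"
      using swap_adj_commute \<open>Suc p < q\<close> assms by blast
    ultimately show ?thesis by (metis r_into_rtrancl)
  qed
qed

lemma locally_confluent_swap_step:
  assumes "\<And>i j. r i j \<Longrightarrow> i \<in> A \<and> j \<in> A" and "transp r"
  shows "locally_confluent (swap_step A r)"
  unfolding locally_confluent_def
proof (intro allI impI)
  fix a b c assume "(a, b) \<in> swap_step A r \<and> (a, c) \<in> swap_step A r"
  then have "set a \<subseteq> A \<and> (\<exists>p. Suc p < length a \<and> r (a ! p) (a ! Suc p) \<and> b = swap_adj a p)"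
    and "\<exists>q. Suc q < length a \<and> r (a ! q) (a ! Suc q) \<and> c = swap_adj a q"
    using swap_step_iff[OF assms(1)] by blast+
  then obtain p q where "set a \<subseteq> A"
    and p: "Suc p < length a" "r (a ! p) (a ! Suc p)" "b = swap_adj a p"
    and q: "Suc q < length a" "r (a ! q) (a ! Suc q)" "c = swap_adj a q"
    by blast
  consider "p < q" | "p = q" | "q < p" by linarith
  then show "\<exists>d. (b, d) \<in> (swap_step A r)\<^sup>* \<and> (c, d) \<in> (swap_step A r)\<^sup>*"
  proof cases
    case 1
    then show ?thesis using swap_step_join[OF assms \<open>set a \<subseteq> A\<close>] p q by blast
  next
    case 2
    then show ?thesis using p q by blast
  next
    case 3
    then show ?thesis using swap_step_join[OF assms \<open>set a \<subseteq> A\<close>] p q by blast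
  qed
qed

lemma complete_swap_step:
  fixes r :: "'a::linorder \<Rightarrow> 'a \<Rightarrow> bool"
  assumes "\<And>i j. r i j \<Longrightarrow> j < i" and "\<And>i j. r i j \<Longrightarrow> i \<in> A \<and> j \<in> A" and "transp r"
  shows "complete (swap_step A r)"
  unfolding complete_def
  using terminating_swap_step[OF assms(1)] locally_confluent_swap_step[OF assms(2,3)] newman
  by blast

lemma Kinf_step_eq_swap_step: "Kinf_step n = swap_step {1..n} (Kinf_rule n)"
  unfolding Kinf_step_def swap_step_def alph_word_def ..

lemma Kinf_rule_less: "Kinf_rule n i j \<Longrightarrow> j < i"
  unfolding Kinf_rule_def by auto

lemma Kinf_rule_letters: "Kinf_rule n i j \<Longrightarrow> i \<in> {1..n} \<and> j \<in> {1..n}"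
  unfolding Kinf_rule_def by auto

lemma transp_Kinf_rule: "transp (Kinf_rule n)"
  unfolding Kinf_rule_def by (auto intro!: transpI)

theorem lemma1:
  fixes n :: nat
  assumes "n \<ge> 3"
  shows "complete (Kinf_step n) \<and> locally_confluent (Kinf_step n) \<and>
    (\<forall>w. alph_word n w \<longrightarrow>
       (\<exists>!v. (w, v) \<in> ((Kinf_step n) \<union> (Kinf_step n)\<inverse>)\<^sup>* \<and> irreducible (Kinf_step n) v))"
proof -
  have complete: "complete (Kinf_step n)"
    unfolding Kinf_step_eq_swap_step
    using Kinf_rule_less Kinf_rule_letters transp_Kinf_rule by (rule complete_swap_step)
  have "locally_confluent (Kinf_step n)"
    unfolding Kinf_step_eq_swap_step
    using Kinf_rule_letters transp_Kinf_rule by (rule locally_confluent_swap_step)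
  with complete show ?thesis
    using complete_unique_normal_form[OF complete] by simp
qed

end
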